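(* Assume $k = 1$, values are i.i.d. (all $F_i = F$ on $[0,\bar v]$), and $A$ is the efficient allocation rule (any tie-breaking). Among all (non-negative) payment rules $P$ that implement $A$ — without requiring ex-post individual rationality — the winner-pays-bid rule minimizes $\mathbb E[g(R)]$ for every convex $g : \mathbb R \to \mathbb R$ (for which the expectations exist), where $R = \sum_i P_i(\bm v)$; i.e. $\mathbb E[g(\sum_i P_i^{\mathrm{WPB}}(\bm v))] \le \mathbb E[g(\sum_i P_i(\bm v))]$.
   Context: Setting: $n$ risk-neutral unit-demand bidders and $k$ identical items, $1 \le k < n$. Bidder $i$ has private value $v_i \in \mathcal V_i = [0,\bar v_i]$, drawn independently across bidders from a distribution $F_i$ with density $f_i > 0$ on $\mathcal V_i$; $\bm v = (v_1,\dots,v_n)$, $\mathcal V = \prod_i \mathcal V_i$. An allocation rule is a measurable map $A : \mathcal V \to \{0,1\}^n$ with $\sum_i A_i(\bm v) \le k$. Its interim allocation is $x_i(v_i) = \mathbb E[A_i(\bm v) \mid v_i]$; its interim payment function is $z_i(v_i) = v_i x_i(v_i) - \int_0^{v_i} x_i(u)\,du$. The efficient allocation rule (single item) gives the item to a bidder with the highest value, ties broken by any fixed rule. A payment rule is a measurable map $P : \mathcal V \to [0,\infty)^n$ (payments are non-negative). $P$ implements $A$ if $(A,P)$ is Bayesian incentive compatible, i.e. $\mathbb E[v_i A_i(\bm v) - P_i(\bm v) \mid v_i] \ge \mathbb E[v_i A_i(v_i',\bm v_{-i}) - P_i(v_i',\bm v_{-i}) \mid v_i]$ for all $i, v_i,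 v_i'$, and satisfies revenue equivalence $\mathbb E[P_i(\bm v) \mid v_i] = z_i(v_i)$ for all $i, v_i$. The winner-pays-bid (WPB) payment rule is $P_i^{\mathrm{WPB}}(\bm v) = b_i^{\mathrm{WPB}}(v_i) A_i(\bm v)$ with $b_i^{\mathrm{WPB}}(v_i) = z_i(v_i)/x_i(v_i)$ when $x_i(v_i) > 0$ and $b_i^{\mathrm{WPB}}(v_i) = 0$ otherwise. *)

theory Defs
  imports "HOL-Probability.Probability"
begin

text \<open>Bidders are indexed by 0..n-1; value profiles are functions nat => real,
  and the joint (i.i.d.) distribution is the product measure.\<close>

definition value_dist :: "real \<Rightarrow> (real \<Rightarrow> real) \<Rightarrow> real measure" where
  "value_dist vbar f = density (restrict_space lborel {0..vbar}) (\<lambda>x. ennreal (f x))"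

definition profile_measure :: "nat \<Rightarrow> real measure \<Rightarrow> (nat \<Rightarrow> real) measure" where
  "profile_measure n D = PiM {..<n} (\<lambda>_. D)"

text \<open>Interim allocation x_i(t) = E[A_i(v) | v_i = t] (others integrated out,
  by independence).\<close>
definition interim_alloc ::
  "(nat \<Rightarrow> real) measure \<Rightarrow> ((nat \<Rightarrow> real) \<Rightarrow> nat \<Rightarrow> real) \<Rightarrow> nat \<Rightarrow> real \<Rightarrow> real" where
  "interim_alloc M A i t = (\<integral>v. A (v(i := t)) i \<partial>M)"

definition interim_pay ::
  "(nat \<Rightarrow> real) measure \<Rightarrow> ((nat \<Rightarrow> real) \<Rightarrow> nat \<Rightarrow> real) \<Rightarrow> nat \<Rightarrow> real \<Rightarrow> real" where
  "interim_pay M A i t =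
     t * interim_alloc M A i t - set_lebesgue_integral lborel {0..t} (\<lambda>u. interim_alloc M A i u)"

definition efficient_single ::
  "nat \<Rightarrow> (nat \<Rightarrow> real) measure \<Rightarrow> ((nat \<Rightarrow> real) \<Rightarrow> nat \<Rightarrow> real) \<Rightarrow> bool" where
  "efficient_single n M A \<longleftrightarrow>
     (\<forall>i<n. (\<lambda>v. A v i) \<in> borel_measurable M) \<and>
     (\<forall>v\<in>space M. (\<forall>i<n. A v i \<in> {0, 1}) \<and> (\<Sum>i<n. A v i) = 1 \<and>
        (\<forall>i<n. A v i = 1 \<longrightarrow> (\<forall>j<n. v j \<le> v i)))"

definition payment_rule ::
  "nat \<Rightarrow> (nat \<Rightarrow> real) measure \<Rightarrow> ((nat \<Rightarrow> real) \<Rightarrow> nat \<Rightarrow> real) \<Rightarrow> bool" where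
  "payment_rule n M P \<longleftrightarrow>
     (\<forall>i<n. (\<lambda>v. P v i) \<in> borel_measurable M) \<and>
     (\<forall>v\<in>space M. \<forall>i<n. 0 \<le> P v i)"

text \<open>P implements A: Bayesian incentive compatibility and revenue equivalence.\<close>
definition implements ::
  "nat \<Rightarrow> real \<Rightarrow> (nat \<Rightarrow> real) measure \<Rightarrow> ((nat \<Rightarrow> real) \<Rightarrow> nat \<Rightarrow> real)
     \<Rightarrow> ((nat \<Rightarrow> real) \<Rightarrow> nat \<Rightarrow> real) \<Rightarrow> bool" where
  "implements n vbar M A P \<longleftrightarrow>
     (\<forall>i<n. \<forall>t\<in>{0..vbar}. \<forall>t'\<in>{0..vbar}.
        (\<integral>v. t * A (v(i := t)) i - P (v(i := t)) i \<partial>M)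
          \<ge> (\<integral>v. t * A (v(i := t')) i - P (v(i := t')) i \<partial>M)) \<and>
     (\<forall>i<n. \<forall>t\<in>{0..vbar}.
        (\<integral>\<^sup>+v. ennreal (P (v(i := t)) i) \<partial>M) = ennreal (interim_pay M A i t))"

definition wpb_bid ::
  "(nat \<Rightarrow> real) measure \<Rightarrow> ((nat \<Rightarrow> real) \<Rightarrow> nat \<Rightarrow> real) \<Rightarrow> nat \<Rightarrow> real \<Rightarrow> real" where
  "wpb_bid M A i t =
     (if interim_alloc M A i t > 0 then interim_pay M A i t / interim_alloc M A i t else 0)"

definition wpb ::
  "(nat \<Rightarrow> real) measure \<Rightarrow> ((nat \<Rightarrow> real) \<Rightarrow> nat \<Rightarrow> real) \<Rightarrow> (nat \<Rightarrow> real) \<Rightarrow> nat \<Rightarrow> real" where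
  "wpb M A v i = wpb_bid M A i (v i) * A v i"

end

theory Submission
  imports Defs
begin

text \<open>
  For i.i.d. atomless values the efficient rule has, whatever the tie-breaking, the symmetric
  interim allocation x(t) = F(t)^(n-1), so winner-pays-bid charges the winner \<beta>(v_w) for a single
  nondecreasing bid function \<beta>; its revenue is \<beta> of the highest value. Let c be a nondecreasing
  subgradient of the convex g. Pointwise,
  g(R_P) \<ge> g(R_WPB) + c(\<beta>(v_w)) (R_P - R_WPB) \<ge> g(R_WPB) + \<Sum>_i c(\<beta>(v_i)) (P_i - P_i^WPB),
  since payments are nonnegative, c \<circ> \<beta> is nondecreasing, v_w is the highest value and only the
  winner pays under WPB. By independence, E[c(\<beta>(v_i)) P_i] = E[c(\<beta>(v_i)) z(v_i)] depends on P
  only through the interim payment z, which revenue equivalence fixes; so the sum has mean zero.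
\<close>

section \<open>Convex functions and integrals of monotone functions\<close>

lemma convex_on_UNIV_mono_subgradient:
  fixes g :: "real \<Rightarrow> real"
  assumes g: "convex_on UNIV g"
  obtains c where "mono c" and "\<And>x y. g x + c x * (y - x) \<le> g y"
proof -
  define S where "S a b = (g a - g b) / (a - b)" for a b
  \<comment> \<open>the right derivative of g\<close>
  define c where "c x = Inf (S x ` {x<..})" for x
  have slopes: "S a m \<le> S a w" "S a w \<le> S m w" if "a < m" "m < w" for a m w
    using convex_on_slope_le[OF g UNIV_I UNIV_I that] unfolding S_def by auto
  have bdd: "bdd_below (S x ` {x<..})" for x
  proof (rule bdd_belowI2)
    fix y
    assume "y \<in> {x<..}"
    then show "S (x - 1) x \<le> S x y"
      using slopes[of "x - 1" x y] by simp
  qed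
  have c_le: "c x \<le> S x y" if "x < y" for x y
    unfolding c_def by (rule cInf_lower[OF _ bdd]) (use that in auto)
  have c_ge: "S y x \<le> c x" if "y < x" for x y
    unfolding c_def by (rule cInf_greatest) (use that slopes in \<open>force+\<close>)
  have "mono c"
  proof (rule monoI)
    fix x x' :: real
    assume "x \<le> x'"
    then consider "x = x'" | "x < x'" by linarith
    then show "c x \<le> c x'"
      by cases (use c_le c_ge order.trans in blast)+
  qed
  moreover have "g x + c x * (y - x) \<le> g y" for x y
  proof (cases x y rule: linorder_cases)
    case less
    have "c x * (y - x) \<le> S x y * (y - x)"
      using c_le[OF less] less by (intro mult_right_mono) auto
    also have "\<dots> = g y - g x"
      unfolding S_def using less by (simp add: field_simps)
    finally show ?thesis by simp
  next
    case greater
    have "S y x * (x - y) \<le> c x * (x - y)"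
      using c_ge[OF greater] greater by (intro mult_right_mono) auto
    moreover have "S y x * (x - y) = g x - g y"
      unfolding S_def using greater by (simp add: field_simps)
    ultimately show ?thesis by (simp add: algebra_simps)
  qed simp
  ultimately show thesis by (rule that)
qed

lemma integral_mono_on_tangent_le:
  fixes h :: "real \<Rightarrow> real"
  assumes h: "mono_on {0..a} h" and s: "s \<in> {0..a}" and t: "t \<in> {0..a}"
  shows "integral {0..s} h + (t - s) * h s \<le> integral {0..t} h"
proof -
  have int: "h integrable_on {l..r}" if "0 \<le> l" "r \<le> a" for l r
    by (rule integrable_on_mono_on, rule mono_on_subset[OF h]) (use that in auto)
  have h_le: "h u \<le> h w" if "u \<in> {0..a}" "w \<in> {0..a}" "u \<le> w" for u w
    using mono_onD[OF h that] .
  show ?thesis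
  proof (cases "s \<le> t")
    case True
    have "integral {0..s} h + integral {s..t} h = integral {0..t} h"
      by (rule Henstock_Kurzweil_Integration.integral_combine) (use s t True int in auto)
    moreover have "integral {s..t} (\<lambda>_. h s) \<le> integral {s..t} h"
      by (rule integral_le) (use s t True int h_le in auto)
    ultimately show ?thesis using True by simp
  next
    case False
    have "integral {0..t} h + integral {t..s} h = integral {0..s} h"
      by (rule Henstock_Kurzweil_Integration.integral_combine) (use s t False int in auto)
    moreover have "integral {t..s} h \<le> integral {t..s} (\<lambda>_. h s)"
      by (rule integral_le) (use s t False int h_le in auto)
    ultimately show ?thesis using False by (simp add: algebra_simps)
  qed
qed

text \<open>The bid below is z t / h t for the interim payment \<open>z t = t * h t - \<integral>\<^sub>0\<^sup>t h\<close>.\<close>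

lemma mono_on_bid_of_mono_alloc:
  fixes h :: "real \<Rightarrow> real"
  assumes h: "mono_on {0..a} h" and h_nonneg: "\<And>t. t \<in> {0..a} \<Longrightarrow> 0 \<le> h t"
  shows "mono_on {0..a} (\<lambda>t. if 0 < h t then (t * h t - integral {0..t} h) / h t else 0)"
proof (rule mono_onI)
  fix s t
  assume s: "s \<in> {0..a}" and t: "t \<in> {0..a}" and "s \<le> t"
  have zero: "0 \<in> {0..a}" using s by auto
  have I_le: "integral {0..t} h \<le> t * h t"
    using integral_mono_on_tangent_le[OF h t zero] by simp
  show "(if 0 < h s then (s * h s - integral {0..s} h) / h s else 0)
      \<le> (if 0 < h t then (t * h t - integral {0..t} h) / h t else 0)"
  proof (cases "0 < h s")
    case False
    then show ?thesis using I_le by auto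
  next
    case True
    have hst: "h s \<le> h t" using mono_onD[OF h s t \<open>s \<le> t\<close>] .
    with True have ht: "0 < h t" by simp
    have "0 \<le> integral {0..s} h"
      using integral_mono_on_tangent_le[OF h zero s] h_nonneg[OF zero] s
      by (auto intro: order.trans[OF mult_nonneg_nonneg])
    then have "integral {0..s} h / h t \<le> integral {0..s} h / h s"
      using True hst by (intro divide_left_mono) auto
    moreover have "integral {0..t} h / h t \<le> integral {0..s} h / h t + (t - s)"
      using integral_mono_on_tangent_le[OF h t s] ht by (simp add: field_simps)
    ultimately show ?thesis
      using True ht by (simp add: diff_divide_distrib)
  qed
qed

section \<open>Powers of a probability space\<close>

lemma measurable_PiM_fun_upd_const:
  assumes "i \<in> I" and "t \<in> space (N i)"
  shows "(\<lambda>v. v(i := t)) \<in> measurable (Pi\<^sub>M I N) (Pi\<^sub>M I N)"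
  by (rule measurable_fun_upd[where J = I]) (use assms in auto)

lemma nn_integral_PiM_fun_upd:
  assumes N: "prob_space N" and I: "finite I" "i \<in> I"
    and F: "F \<in> borel_measurable (Pi\<^sub>M I (\<lambda>_. N))"
  shows "(\<integral>\<^sup>+v. F v \<partial>Pi\<^sub>M I (\<lambda>_. N)) = (\<integral>\<^sup>+t. (\<integral>\<^sup>+v. F (v(i := t)) \<partial>Pi\<^sub>M I (\<lambda>_. N)) \<partial>N)"
proof -
  interpret N: prob_space N by (rule N)
  interpret product_sigma_finite "\<lambda>_. N" by unfold_locales
  define J where "J = I - {i}"
  have I_eq: "I = insert i J" and J: "finite J" "i \<notin> J"
    using I by (auto simp: J_def)
  have "(\<integral>\<^sup>+v. F v \<partial>Pi\<^sub>M I (\<lambda>_. N)) = (\<integral>\<^sup>+t. (\<integral>\<^sup>+w. F (w(i := t)) \<partial>Pi\<^sub>M J (\<lambda>_. N)) \<partial>N)"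
    using F unfolding I_eq by (rule product_nn_integral_insert_rev[OF J])
  also have "\<dots> = (\<integral>\<^sup>+t. (\<integral>\<^sup>+v. F (v(i := t)) \<partial>Pi\<^sub>M I (\<lambda>_. N)) \<partial>N)"
  proof (rule nn_integral_cong)
    fix t
    assume t: "t \<in> space N"
    have "(\<lambda>v. F (v(i := t))) \<in> borel_measurable (Pi\<^sub>M (insert i J) (\<lambda>_. N))"
      using measurable_compose[OF measurable_PiM_fun_upd_const[OF I(2)] F] t
      unfolding I_eq by simp
    then have "(\<integral>\<^sup>+v. F (v(i := t)) \<partial>Pi\<^sub>M I (\<lambda>_. N))
        = (\<integral>\<^sup>+w. (\<integral>\<^sup>+s. F ((w(i := s))(i := t)) \<partial>N) \<partial>Pi\<^sub>M J (\<lambda>_. N))"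
      unfolding I_eq by (rule product_nn_integral_insert[OF J])
    also have "\<dots> = (\<integral>\<^sup>+w. F (w(i := t)) \<partial>Pi\<^sub>M J (\<lambda>_. N))"
      by (simp add: N.emeasure_space_1)
    finally show "(\<integral>\<^sup>+w. F (w(i := t)) \<partial>Pi\<^sub>M J (\<lambda>_. N)) = (\<integral>\<^sup>+v. F (v(i := t)) \<partial>Pi\<^sub>M I (\<lambda>_. N))"
      by simp
  qed
  finally show ?thesis .
qed

lemma emeasure_PiM_box_but_one:
  assumes N: "prob_space N" and I: "finite I" "i \<in> I" and S: "S \<in> sets N"
  shows "emeasure (Pi\<^sub>M I (\<lambda>_. N)) (\<Pi>\<^sub>E k\<in>I. if k = i then space N else S) = emeasure N S ^ (card I - 1)"
proof -
  interpret N: prob_space N by (rule N)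
  interpret product_sigma_finite "\<lambda>_. N" by unfold_locales
  have "emeasure (Pi\<^sub>M I (\<lambda>_. N)) (\<Pi>\<^sub>E k\<in>I. if k = i then space N else S)
      = (\<Prod>k\<in>I. emeasure N (if k = i then space N else S))"
    by (rule emeasure_PiM) (use I S in auto)
  also have "\<dots> = (\<Prod>k\<in>I - {i}. emeasure N S)"
    by (subst prod.remove[OF I]) (auto simp: N.emeasure_space_1 intro!: prod.cong)
  also have "\<dots> = emeasure N S ^ (card I - 1)"
    using I by simp
  finally show ?thesis .
qed

section \<open>The efficient auction with i.i.d. values\<close>

locale iid_efficient_auction =
  fixes n :: nat and vbar :: real and f :: "real \<Rightarrow> real"
    and A :: "(nat \<Rightarrow> real) \<Rightarrow> nat \<Rightarrow> real"
  assumes vbar: "0 < vbar"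
    and f_meas: "f \<in> borel_measurable borel"
    and prob_space_D: "prob_space (value_dist vbar f)"
    and A_eff: "efficient_single n (profile_measure n (value_dist vbar f)) A"
begin

abbreviation "D \<equiv> value_dist vbar f"
abbreviation "M \<equiv> profile_measure n D"
abbreviation "x \<equiv> interim_alloc M A"
abbreviation "z \<equiv> interim_pay M A"
abbreviation "b \<equiv> wpb_bid M A"

lemma space_D: "space D = {0..vbar}"
  unfolding value_dist_def by (simp add: space_restrict_space)

lemma sets_D: "sets D = sets (restrict_space borel {0..vbar})"
  unfolding value_dist_def by (simp add: sets_restrict_space)

lemma borel_subset_in_sets_D: "S \<subseteq> {0..vbar} \<Longrightarrow> S \<in> sets borel \<Longrightarrow> S \<in> sets D"
  unfolding sets_D by (subst sets_restrict_space_iff) auto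

lemma singleton_null_sets_D: "t \<in> {0..vbar} \<Longrightarrow> {t} \<in> null_sets D"
proof -
  assume t: "t \<in> {0..vbar}"
  have dens: "(\<lambda>x. ennreal (f x)) \<in> borel_measurable (restrict_space lborel {0..vbar})"
    using f_meas by (auto intro: measurable_restrict_space1)
  have "{t} \<in> null_sets (restrict_space lborel {0..vbar})"
    using t by (simp add: null_sets_restrict_space finite_imp_null_set_lborel)
  then have "AE s in restrict_space lborel {0..vbar}. s \<in> {t} \<longrightarrow> ennreal (f s) = 0"
    by (rule AE_not_in[THEN eventually_mono]) blast
  moreover have "{t} \<in> sets (restrict_space lborel {0..vbar})"
    using t by (simp add: sets_restrict_space_iff)
  ultimately show ?thesis
    unfolding value_dist_def using dens by (simp add: null_sets_density_iff)
qed

lemma prob_space_M: "prob_space M"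
  unfolding profile_measure_def by (intro prob_space_PiM prob_space_D)

lemma space_M: "space M = (\<Pi>\<^sub>E i\<in>{..<n}. {0..vbar})"
  unfolding profile_measure_def by (simp add: space_PiM space_D)

lemma component_in_space_M: "v \<in> space M \<Longrightarrow> i < n \<Longrightarrow> v i \<in> {0..vbar}"
  by (simp add: space_M PiE_iff)

lemma fun_upd_in_space_M: "v \<in> space M \<Longrightarrow> i < n \<Longrightarrow> t \<in> {0..vbar} \<Longrightarrow> v(i := t) \<in> space M"
  by (simp add: space_M PiE_iff extensional_def)

lemma measurable_fun_upd_M: "i < n \<Longrightarrow> t \<in> {0..vbar} \<Longrightarrow> (\<lambda>v. v(i := t)) \<in> measurable M M"
  unfolding profile_measure_def by (rule measurable_PiM_fun_upd_const) (simp_all add: space_D)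

lemma measurable_component_M: "i < n \<Longrightarrow> h \<in> borel_measurable D \<Longrightarrow> (\<lambda>v. h (v i)) \<in> borel_measurable M"
proof -
  assume "i < n" and h: "h \<in> borel_measurable D"
  then have "(\<lambda>v. v i) \<in> measurable M D"
    unfolding profile_measure_def by (intro measurable_component_singleton) simp
  then show ?thesis using h by (rule measurable_compose)
qed

lemma alloc_measurable: "i < n \<Longrightarrow> (\<lambda>v. A v i) \<in> borel_measurable M"
  using A_eff unfolding efficient_single_def by auto

lemma alloc_01: "v \<in> space M \<Longrightarrow> i < n \<Longrightarrow> A v i = 0 \<or> A v i = 1"
  using A_eff unfolding efficient_single_def by auto

lemma alloc_sum: "v \<in> space M \<Longrightarrow> (\<Sum>i<n. A v i) = 1"
  using A_eff unfolding efficient_single_def by auto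

lemma alloc_highest: "v \<in> space M \<Longrightarrow> i < n \<Longrightarrow> A v i = 1 \<Longrightarrow> j < n \<Longrightarrow> v j \<le> v i"
  using A_eff unfolding efficient_single_def by auto

lemma alloc_nonneg: "v \<in> space M \<Longrightarrow> i < n \<Longrightarrow> 0 \<le> A v i"
  using alloc_01 by force

lemma alloc_le_1: "v \<in> space M \<Longrightarrow> i < n \<Longrightarrow> A v i \<le> 1"
  using alloc_01 by force

lemma alloc_ex_winner:
  assumes v: "v \<in> space M"
  obtains w where "w < n" and "A v w = 1"
proof -
  have "\<not> (\<forall>k<n. A v k = 0)" using alloc_sum[OF v] by (metis lessThan_iff sum.neutral zero_neq_one)
  then show thesis using alloc_01[OF v] that by blast
qed

lemma alloc_eq_winner_indicator:
  assumes v: "v \<in> space M" and w: "w < n" "A v w = 1" and i: "i < n"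
  shows "A v i = (if i = w then 1 else 0)"
proof (cases "i = w")
  case False
  have "(\<Sum>k\<in>{w, i}. A v k) \<le> (\<Sum>k<n. A v k)"
    by (rule sum_mono2) (use w i alloc_nonneg[OF v] in auto)
  then have "A v w + A v i \<le> 1" using False alloc_sum[OF v] by simp
  then show ?thesis using False w alloc_01[OF v i] by auto
qed (use w in simp)

lemma alloc_fun_upd_measurable: "i < n \<Longrightarrow> t \<in> {0..vbar} \<Longrightarrow> (\<lambda>v. A (v(i := t)) i) \<in> borel_measurable M"
  using measurable_compose[OF measurable_fun_upd_M alloc_measurable] by simp

lemma alloc_fun_upd_integrable:
  assumes "i < n" "t \<in> {0..vbar}"
  shows "integrable M (\<lambda>v. A (v(i := t)) i)"
proof -
  interpret prob_space M by (rule prob_space_M)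
  show ?thesis
    by (rule integrable_const_bound[where B = 1])
      (use assms alloc_nonneg alloc_le_1 fun_upd_in_space_M alloc_fun_upd_measurable in auto)
qed

definition others_in :: "nat \<Rightarrow> real set \<Rightarrow> (nat \<Rightarrow> real) set" where
  "others_in i T = (\<Pi>\<^sub>E k\<in>{..<n}. if k = i then {0..vbar} else T)"

lemma others_in_sets: "T \<subseteq> {0..vbar} \<Longrightarrow> T \<in> sets borel \<Longrightarrow> others_in i T \<in> sets M"
  unfolding profile_measure_def others_in_def
  by (rule sets_PiM_I_finite) (auto intro: borel_subset_in_sets_D)

lemma measure_others_in:
  assumes i: "i < n" and T: "T \<subseteq> {0..vbar}" "T \<in> sets borel"
  shows "measure M (others_in i T) = measure D T ^ (n - 1)"
proof -
  interpret D: prob_space D by (rule prob_space_D)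
  have "emeasure M (others_in i T) = emeasure D T ^ (n - 1)"
    using emeasure_PiM_box_but_one[OF prob_space_D, of "{..<n}" i T, unfolded space_D] i T
    by (simp add: profile_measure_def others_in_def borel_subset_in_sets_D)
  also have "\<dots> = ennreal (measure D T ^ (n - 1))"
    by (simp add: D.emeasure_eq_measure ennreal_power)
  finally show ?thesis
    by (simp add: measure_def)
qed

lemma alloc_fun_upd_if_others_below:
  assumes v: "v \<in> space M" "v \<in> others_in i {0..<t}" and i: "i < n" and t: "t \<in> {0..vbar}"
  shows "A (v(i := t)) i = 1"
proof -
  have vt: "v(i := t) \<in> space M" by (rule fun_upd_in_space_M[OF v(1) i t])
  obtain w where w: "w < n" "A (v(i := t)) w = 1" by (rule alloc_ex_winner[OF vt])
  have "w = i"
  proof (rule ccontr)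
    assume "w \<noteq> i"
    then have "v w < t" using PiE_mem[OF v(2)[unfolded others_in_def], of w] w(1) by simp
    moreover have "t \<le> v w" using alloc_highest[OF vt w i] \<open>w \<noteq> i\<close> by simp
    ultimately show False by simp
  qed
  then show ?thesis using w by simp
qed

lemma others_le_if_alloc_fun_upd:
  assumes v: "v \<in> space M" and i: "i < n" and t: "t \<in> {0..vbar}" and win: "A (v(i := t)) i = 1"
  shows "v \<in> others_in i {0..t}"
proof -
  have vt: "v(i := t) \<in> space M" by (rule fun_upd_in_space_M[OF v i t])
  have "v k \<in> {0..t}" if "k < n" "k \<noteq> i" for k
    using alloc_highest[OF vt i win that(1)] component_in_space_M[OF v that(1)] that by simp
  then show ?thesis
    using v component_in_space_M[OF v] by (auto simp: others_in_def PiE_iff space_M)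
qed

lemma alloc_fun_upd_between_indicators:
  assumes v: "v \<in> space M" and i: "i < n" and t: "t \<in> {0..vbar}"
  shows "indicator (others_in i {0..<t}) v \<le> A (v(i := t)) i"
    and "A (v(i := t)) i \<le> indicator (others_in i {0..t}) v"
proof -
  have vt: "v(i := t) \<in> space M" by (rule fun_upd_in_space_M[OF v i t])
  show "indicator (others_in i {0..<t}) v \<le> A (v(i := t)) i"
    by (cases "v \<in> others_in i {0..<t}")
      (simp_all add: alloc_fun_upd_if_others_below[OF v _ i t] alloc_nonneg[OF vt i])
  show "A (v(i := t)) i \<le> indicator (others_in i {0..t}) v"
    using alloc_01[OF vt i] others_le_if_alloc_fun_upd[OF v i t] by auto
qed

text \<open>The allocation of bidder i at \<open>v(i := t)\<close> is squeezed between the events "all others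
  below t" and "all others at most t", which have equal probability since D has no atoms; hence
  the tie-breaking rule does not matter.\<close>

lemma interim_alloc_eq_power:
  assumes i: "i < n" and t: "t \<in> {0..vbar}"
  shows "x i t = measure D {0..<t} ^ (n - 1)"
proof -
  interpret prob_space M by (rule prob_space_M)
  have sets: "others_in i {0..<t} \<in> sets M" "others_in i {0..t} \<in> sets M"
    using t by (auto intro!: others_in_sets)
  then have integrable: "integrable M (indicator (others_in i {0..<t}) :: _ \<Rightarrow> real)"
    "integrable M (indicator (others_in i {0..t}) :: _ \<Rightarrow> real)"
    by (auto intro!: integrable_real_indicator simp: less_top[symmetric])
  have "measure M (others_in i {0..<t}) \<le> x i t"
    unfolding interim_alloc_def
    using integral_mono[OF integrable(1) alloc_fun_upd_integrable[OF i t]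
        alloc_fun_upd_between_indicators(1)[OF _ i t]] sets(1) by simp
  moreover have "x i t \<le> measure M (others_in i {0..t})"
    unfolding interim_alloc_def
    using integral_mono[OF alloc_fun_upd_integrable[OF i t] integrable(2)
        alloc_fun_upd_between_indicators(2)[OF _ i t]] sets(2) by simp
  moreover have "measure D {0..t} = measure D {0..<t}"
  proof -
    have "measure D ({0..<t} \<union> {t}) = measure D {0..<t}"
      by (rule measure_Un_null_set) (use t in \<open>auto intro: borel_subset_in_sets_D singleton_null_sets_D\<close>)
    moreover have "{0..<t} \<union> {t} = {0..t}" using t by auto
    ultimately show ?thesis by simp
  qed
  moreover have "measure M (others_in i T) = measure D T ^ (n - 1)" if "T = {0..<t} \<or> T = {0..t}" for T
    using that t by (intro measure_others_in[OF i]) auto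
  ultimately show ?thesis
    by (metis order_antisym)
qed

lemma interim_alloc_nonneg: "i < n \<Longrightarrow> t \<in> {0..vbar} \<Longrightarrow> 0 \<le> x i t"
  by (simp add: interim_alloc_eq_power)

lemma interim_alloc_le_1:
  assumes "i < n" and "t \<in> {0..vbar}"
  shows "x i t \<le> 1"
proof -
  interpret D: prob_space D by (rule prob_space_D)
  show ?thesis
    using assms by (simp add: interim_alloc_eq_power power_le_one)
qed

lemma interim_alloc_symmetric: "i < n \<Longrightarrow> j < n \<Longrightarrow> t \<in> {0..vbar} \<Longrightarrow> x i t = x j t"
  by (simp add: interim_alloc_eq_power)

lemma interim_alloc_mono_on: "i < n \<Longrightarrow> mono_on {0..vbar} (x i)"
proof (rule mono_onI)
  interpret D: prob_space D by (rule prob_space_D)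
  fix s t
  assume i: "i < n" and s: "s \<in> {0..vbar}" and t: "t \<in> {0..vbar}" and "s \<le> t"
  have "measure D {0..<s} \<le> measure D {0..<t}"
    by (rule D.finite_measure_mono) (use \<open>s \<le> t\<close> t in \<open>auto intro: borel_subset_in_sets_D\<close>)
  then show "x i s \<le> x i t"
    by (simp add: interim_alloc_eq_power[OF i s] interim_alloc_eq_power[OF i t] power_mono)
qed

lemma interim_alloc_set_integrable:
  assumes i: "i < n" and t: "t \<in> {0..vbar}"
  shows "set_integrable lborel {0..t} (x i)"
  unfolding set_integrable_def
proof (rule integrableI_bounded_set[where A = "{0..t}" and B = 1])
  have "x i \<in> borel_measurable (restrict_space borel {0..t})"
    by (rule borel_measurable_mono_on_fnc[OF mono_on_subset[OF interim_alloc_mono_on[OF i]]])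
      (use t in auto)
  then show "(\<lambda>u. indicator {0..t} u *\<^sub>R x i u) \<in> borel_measurable lborel"
    by (subst (asm) borel_measurable_restrict_space_iff) auto
  show "AE u in lborel. u \<in> {0..t} \<longrightarrow> norm (indicator {0..t} u *\<^sub>R x i u) \<le> 1"
    using interim_alloc_nonneg[OF i] interim_alloc_le_1[OF i] t by (auto intro!: AE_I2)
qed (use t in \<open>auto simp: emeasure_lborel_Icc\<close>)

lemma interim_pay_eq: "i < n \<Longrightarrow> t \<in> {0..vbar} \<Longrightarrow> z i t = t * x i t - integral {0..t} (x i)"
  unfolding interim_pay_def by (simp add: set_borel_integral_eq_integral(2)[OF interim_alloc_set_integrable])

lemma interim_pay_bounds:
  assumes i: "i < n" and t: "t \<in> {0..vbar}"
  shows "0 \<le> z i t" and "z i t \<le> t * x i t"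
proof -
  have zero: "0 \<in> {0..vbar}" using vbar by simp
  note tangent = integral_mono_on_tangent_le[OF interim_alloc_mono_on[OF i]]
  show "0 \<le> z i t"
    using tangent[OF t zero] by (simp add: interim_pay_eq[OF i t])
  show "z i t \<le> t * x i t"
    using tangent[OF zero t] interim_alloc_nonneg[OF i zero] t
    by (auto simp: interim_pay_eq[OF i t] intro: order.trans[OF mult_nonneg_nonneg])
qed

lemma wpb_bid_eq:
  "i < n \<Longrightarrow> t \<in> {0..vbar} \<Longrightarrow> b i t = (if 0 < x i t then (t * x i t - integral {0..t} (x i)) / x i t else 0)"
  unfolding wpb_bid_def by (simp add: interim_pay_eq)

lemma wpb_bid_mul_interim_alloc:
  assumes i: "i < n" and t: "t \<in> {0..vbar}"
  shows "b i t * x i t = z i t"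
proof (cases "0 < x i t")
  case False
  then have "x i t = 0" using interim_alloc_nonneg[OF i t] by simp
  then show ?thesis using interim_pay_bounds[OF i t] unfolding wpb_bid_def by simp
qed (simp add: wpb_bid_def)

lemma wpb_bid_bounds:
  assumes i: "i < n" and t: "t \<in> {0..vbar}"
  shows "0 \<le> b i t" and "b i t \<le> t"
  using interim_pay_bounds[OF i t] t unfolding wpb_bid_def by (auto simp: field_simps)

lemma wpb_bid_mono_on: "i < n \<Longrightarrow> mono_on {0..vbar} (b i)"
proof (rule mono_onI)
  fix s t
  assume i: "i < n" and s: "s \<in> {0..vbar}" and t: "t \<in> {0..vbar}" and "s \<le> t"
  have "mono_on {0..vbar} (\<lambda>t. if 0 < x i t then (t * x i t - integral {0..t} (x i)) / x i t else 0)"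
    by (rule mono_on_bid_of_mono_alloc) (use i interim_alloc_mono_on interim_alloc_nonneg in auto)
  from mono_onD[OF this s t \<open>s \<le> t\<close>] show "b i s \<le> b i t"
    by (simp only: wpb_bid_eq[OF i s] wpb_bid_eq[OF i t])
qed

lemma wpb_bid_symmetric:
  assumes i: "i < n" and j: "j < n" and t: "t \<in> {0..vbar}"
  shows "b i t = b j t"
proof -
  have "integral {0..t} (x i) = integral {0..t} (x j)"
    by (intro integral_cong interim_alloc_symmetric) (use i j t in auto)
  then show ?thesis
    using interim_alloc_symmetric[OF i j t] by (simp add: wpb_bid_eq[OF i t] wpb_bid_eq[OF j t])
qed

lemma wpb_bid_measurable: "i < n \<Longrightarrow> b i \<in> borel_measurable D"
  by (subst measurable_cong_sets[OF sets_D refl]) (rule borel_measurable_mono_on_fnc[OF wpb_bid_mono_on])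

lemma wpb_fun_upd: "wpb M A (v(i := t)) i = b i t * A (v(i := t)) i"
  unfolding wpb_def by simp

lemma wpb_measurable: "i < n \<Longrightarrow> (\<lambda>v. wpb M A v i) \<in> borel_measurable M"
  unfolding wpb_def by (intro borel_measurable_times measurable_component_M wpb_bid_measurable alloc_measurable)

lemma wpb_nonneg: "v \<in> space M \<Longrightarrow> i < n \<Longrightarrow> 0 \<le> wpb M A v i"
  unfolding wpb_def using wpb_bid_bounds(1) component_in_space_M alloc_nonneg by simp

lemma payment_rule_wpb: "payment_rule n M (wpb M A)"
  unfolding payment_rule_def by (simp add: wpb_measurable wpb_nonneg)

lemma nn_integral_wpb_fun_upd:
  assumes i: "i < n" and t: "t \<in> {0..vbar}"
  shows "(\<integral>\<^sup>+v. ennreal (wpb M A (v(i := t)) i) \<partial>M) = ennreal (z i t)"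
proof -
  have "(\<integral>\<^sup>+v. ennreal (wpb M A (v(i := t)) i) \<partial>M) = (\<integral>\<^sup>+v. ennreal (b i t) * ennreal (A (v(i := t)) i) \<partial>M)"
    using wpb_bid_bounds(1)[OF i t] alloc_nonneg[OF fun_upd_in_space_M[OF _ i t] i]
    by (intro nn_integral_cong) (simp add: wpb_fun_upd ennreal_mult)
  also have "\<dots> = ennreal (b i t) * (\<integral>\<^sup>+v. ennreal (A (v(i := t)) i) \<partial>M)"
    using alloc_fun_upd_measurable[OF i t] by (simp add: nn_integral_cmult)
  also have "(\<integral>\<^sup>+v. ennreal (A (v(i := t)) i) \<partial>M) = ennreal (x i t)"
    unfolding interim_alloc_def
    by (rule nn_integral_eq_integral[OF alloc_fun_upd_integrable[OF i t]])
      (use i t alloc_nonneg fun_upd_in_space_M in \<open>auto intro!: AE_I2\<close>)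
  also have "ennreal (b i t) * ennreal (x i t) = ennreal (z i t)"
    using wpb_bid_mul_interim_alloc[OF i t] wpb_bid_bounds(1)[OF i t] interim_alloc_nonneg[OF i t]
    by (metis ennreal_mult)
  finally show ?thesis .
qed

lemma interim_utility_wpb:
  assumes i: "i < n" and s: "s \<in> {0..vbar}"
  shows "(\<integral>v. t * A (v(i := s)) i - wpb M A (v(i := s)) i \<partial>M) = t * x i s - z i s"
proof -
  have "(\<integral>v. t * A (v(i := s)) i - wpb M A (v(i := s)) i \<partial>M) = (\<integral>v. (t - b i s) * A (v(i := s)) i \<partial>M)"
    by (rule Bochner_Integration.integral_cong) (simp_all add: wpb_fun_upd algebra_simps)
  also have "\<dots> = (t - b i s) * x i s"
    unfolding interim_alloc_def by simp
  also have "\<dots> = t * x i s - z i s"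
    using wpb_bid_mul_interim_alloc[OF i s] by (simp add: algebra_simps)
  finally show ?thesis .
qed

lemma implements_wpb: "implements n vbar M A (wpb M A)"
  unfolding implements_def
proof (intro conjI allI impI ballI)
  fix i t s
  assume i: "i < n" and t: "t \<in> {0..vbar}" and s: "s \<in> {0..vbar}"
  have "integral {0..s} (x i) + (t - s) * x i s \<le> integral {0..t} (x i)"
    by (rule integral_mono_on_tangent_le[OF interim_alloc_mono_on[OF i] s t])
  then show "(\<integral>v. t * A (v(i := s)) i - wpb M A (v(i := s)) i \<partial>M)
      \<le> (\<integral>v. t * A (v(i := t)) i - wpb M A (v(i := t)) i \<partial>M)"
    unfolding interim_utility_wpb[OF i s] interim_utility_wpb[OF i t]
    by (simp add: interim_pay_eq[OF i s] interim_pay_eq[OF i t] algebra_simps)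
qed (rule nn_integral_wpb_fun_upd)

subsection \<open>Expected revenue weighted by a function of a value\<close>

definition pays_interim :: "((nat \<Rightarrow> real) \<Rightarrow> nat \<Rightarrow> real) \<Rightarrow> nat \<Rightarrow> bool" where
  "pays_interim Q i \<longleftrightarrow> (\<lambda>v. Q v i) \<in> borel_measurable M \<and> (\<forall>v\<in>space M. 0 \<le> Q v i) \<and>
     (\<forall>t\<in>{0..vbar}. (\<integral>\<^sup>+v. ennreal (Q (v(i := t)) i) \<partial>M) = ennreal (z i t))"

lemma pays_interim_if_implements:
  "payment_rule n M P \<Longrightarrow> implements n vbar M A P \<Longrightarrow> i < n \<Longrightarrow> pays_interim P i"
  unfolding pays_interim_def payment_rule_def implements_def by blast

lemma nn_integral_weighted_payment:
  assumes Q: "pays_interim Q i" and i: "i < n"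
    and phi: "phi \<in> borel_measurable D" and phi_nonneg: "\<And>t. t \<in> {0..vbar} \<Longrightarrow> 0 \<le> phi t"
  shows "(\<integral>\<^sup>+v. ennreal (phi (v i) * Q v i) \<partial>M) = (\<integral>\<^sup>+t. ennreal (phi t * z i t) \<partial>D)"
proof -
  have Q_meas: "(\<lambda>v. Q v i) \<in> borel_measurable M" using Q unfolding pays_interim_def by blast
  have "(\<lambda>v. ennreal (phi (v i) * Q v i)) \<in> borel_measurable M"
    by (intro measurable_compose[OF _ measurable_ennreal] borel_measurable_times
        measurable_component_M[OF i phi] Q_meas)
  then have "(\<integral>\<^sup>+v. ennreal (phi (v i) * Q v i) \<partial>M)
      = (\<integral>\<^sup>+t. (\<integral>\<^sup>+v. ennreal (phi t * Q (v(i := t)) i) \<partial>M) \<partial>D)"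
    unfolding profile_measure_def using i
    by (subst nn_integral_PiM_fun_upd[OF prob_space_D, of "{..<n}" i]) simp_all
  also have "\<dots> = (\<integral>\<^sup>+t. ennreal (phi t * z i t) \<partial>D)"
  proof (rule nn_integral_cong)
    fix t
    assume "t \<in> space D"
    then have t: "t \<in> {0..vbar}" by (simp add: space_D)
    have "(\<integral>\<^sup>+v. ennreal (phi t * Q (v(i := t)) i) \<partial>M) = (\<integral>\<^sup>+v. ennreal (phi t) * ennreal (Q (v(i := t)) i) \<partial>M)"
      using Q phi_nonneg[OF t] fun_upd_in_space_M[OF _ i t] unfolding pays_interim_def
      by (intro nn_integral_cong) (simp add: ennreal_mult)
    also have "\<dots> = ennreal (phi t) * (\<integral>\<^sup>+v. ennreal (Q (v(i := t)) i) \<partial>M)"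
      using measurable_compose[OF measurable_fun_upd_M[OF i t] Q_meas]
      by (intro nn_integral_cmult) simp
    also have "\<dots> = ennreal (phi t * z i t)"
      using Q t phi_nonneg[OF t] interim_pay_bounds(1)[OF i t]
      unfolding pays_interim_def by (simp add: ennreal_mult)
    finally show "(\<integral>\<^sup>+v. ennreal (phi t * Q (v(i := t)) i) \<partial>M) = ennreal (phi t * z i t)" .
  qed
  finally show ?thesis .
qed

lemma weighted_payment_nonneg_integral:
  assumes Q: "pays_interim Q i" and i: "i < n" and phi: "phi \<in> borel_measurable D"
    and phi_bounds: "\<And>t. t \<in> {0..vbar} \<Longrightarrow> 0 \<le> phi t \<and> phi t \<le> K"
  shows "integrable M (\<lambda>v. phi (v i) * Q v i)"
    and "(\<integral>v. phi (v i) * Q v i \<partial>M) = enn2real (\<integral>\<^sup>+t. ennreal (phi t * z i t) \<partial>D)"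
proof -
  interpret D: prob_space D by (rule prob_space_D)
  have Q_nonneg: "\<And>v. v \<in> space M \<Longrightarrow> 0 \<le> Q v i" using Q unfolding pays_interim_def by blast
  have phi_nonneg: "\<And>t. t \<in> {0..vbar} \<Longrightarrow> 0 \<le> phi t" using phi_bounds by blast
  note nn = nn_integral_weighted_payment[OF Q i phi phi_nonneg]
  have meas: "(\<lambda>v. phi (v i) * Q v i) \<in> borel_measurable M"
    using Q unfolding pays_interim_def by (intro borel_measurable_times measurable_component_M[OF i phi]) auto
  have nonneg: "AE v in M. 0 \<le> phi (v i) * Q v i"
  proof (rule AE_I2)
    fix v
    assume v: "v \<in> space M"
    show "0 \<le> phi (v i) * Q v i"
      using phi_nonneg[OF component_in_space_M[OF v i]] Q_nonneg[OF v] by simp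
  qed
  have "(\<integral>\<^sup>+t. ennreal (phi t * z i t) \<partial>D) \<le> (\<integral>\<^sup>+t. ennreal (K * vbar) \<partial>D)"
  proof (rule nn_integral_mono)
    fix t
    assume "t \<in> space D"
    then have t: "t \<in> {0..vbar}" by (simp add: space_D)
    have "t * x i t \<le> vbar * 1"
      by (rule mult_mono) (use t interim_alloc_le_1[OF i t] interim_alloc_nonneg[OF i t] in auto)
    then have "z i t \<le> vbar" using interim_pay_bounds(2)[OF i t] by simp
    then have "phi t * z i t \<le> K * vbar"
      using phi_bounds[OF t] interim_pay_bounds(1)[OF i t] by (intro mult_mono) auto
    then show "ennreal (phi t * z i t) \<le> ennreal (K * vbar)" by (rule ennreal_leI)
  qed
  also have "\<dots> < \<infinity>" by (simp add: D.emeasure_space_1)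
  finally have "(\<integral>\<^sup>+v. ennreal (phi (v i) * Q v i) \<partial>M) < \<infinity>"
    by (simp only: nn)
  then show "integrable M (\<lambda>v. phi (v i) * Q v i)"
    by (rule integrableI_nonneg[OF meas nonneg])
  show "(\<integral>v. phi (v i) * Q v i \<partial>M) = enn2real (\<integral>\<^sup>+t. ennreal (phi t * z i t) \<partial>D)"
    by (simp only: integral_eq_nn_integral[OF meas nonneg] nn)
qed

lemma weighted_payment_integral_eq:
  assumes Q1: "pays_interim Q1 i" and Q2: "pays_interim Q2 i" and i: "i < n"
    and psi: "psi \<in> borel_measurable D" and psi_bound: "\<And>t. t \<in> {0..vbar} \<Longrightarrow> \<bar>psi t\<bar> \<le> K"
  shows "integrable M (\<lambda>v. psi (v i) * Q1 v i)" and "integrable M (\<lambda>v. psi (v i) * Q2 v i)"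
    and "(\<integral>v. psi (v i) * Q1 v i \<partial>M) = (\<integral>v. psi (v i) * Q2 v i \<partial>M)"
proof -
  \<comment> \<open>shift \<open>psi\<close> to a nonnegative weight and subtract the constant weight K again\<close>
  define phi where "phi t = psi t + K" for t
  have phi: "phi \<in> borel_measurable D" unfolding phi_def using psi by simp
  have phi_bounds: "0 \<le> phi t \<and> phi t \<le> 2 * K" and K_bounds: "0 \<le> K \<and> K \<le> 2 * K"
    if "t \<in> {0..vbar}" for t
    using psi_bound[OF that] unfolding phi_def by (auto simp: abs_le_iff)
  have split: "psi (v i) * Q v i = phi (v i) * Q v i - K * Q v i" for Q v
    unfolding phi_def by (simp add: algebra_simps)
  note Q1_phi = weighted_payment_nonneg_integral[OF Q1 i phi phi_bounds]
    and Q1_K = weighted_payment_nonneg_integral[where phi = "\<lambda>_. K" and K = "2 * K",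
      OF Q1 i borel_measurable_const K_bounds]
    and Q2_phi = weighted_payment_nonneg_integral[OF Q2 i phi phi_bounds]
    and Q2_K = weighted_payment_nonneg_integral[where phi = "\<lambda>_. K" and K = "2 * K",
      OF Q2 i borel_measurable_const K_bounds]
  show "integrable M (\<lambda>v. psi (v i) * Q1 v i)" "integrable M (\<lambda>v. psi (v i) * Q2 v i)"
    unfolding split using Q1_phi(1) Q1_K(1) Q2_phi(1) Q2_K(1) by (auto intro: Bochner_Integration.integrable_diff)
  show "(\<integral>v. psi (v i) * Q1 v i \<partial>M) = (\<integral>v. psi (v i) * Q2 v i \<partial>M)"
    unfolding split
    using Q1_phi Q1_K Q2_phi Q2_K by (simp only: Bochner_Integration.integral_diff)
qed

lemma n_pos: "0 < n"
proof -
  interpret prob_space M by (rule prob_space_M)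
  obtain v where "v \<in> space M" using not_empty by blast
  then obtain w where "w < n" "A v w = 1" by (rule alloc_ex_winner)
  then show ?thesis by simp
qed

lemma wpb_eq_common_bid:
  assumes "v \<in> space M" and "i < n"
  shows "wpb M A v i = b 0 (v i) * A v i"
  unfolding wpb_def by (simp only: wpb_bid_symmetric[OF \<open>i < n\<close> n_pos component_in_space_M[OF assms]])

lemma convex_revenue_lower_bound:
  fixes g c :: "real \<Rightarrow> real"
  assumes P_nonneg: "\<And>i. i < n \<Longrightarrow> 0 \<le> P v i" and c: "mono c"
    and supporting: "\<And>x y. g x + c x * (y - x) \<le> g y" and v: "v \<in> space M"
  shows "g (\<Sum>i<n. wpb M A v i) + (\<Sum>i<n. c (b 0 (v i)) * (P v i - wpb M A v i)) \<le> g (\<Sum>i<n. P v i)"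
proof -
  obtain w where w: "w < n" "A v w = 1" by (rule alloc_ex_winner[OF v])
  have W: "wpb M A v i = (if i = w then b 0 (v w) else 0)" if "i < n" for i
    using wpb_eq_common_bid[OF v that] alloc_eq_winner_indicator[OF v w that] by simp
  have revenue: "(\<Sum>i<n. wpb M A v i) = b 0 (v w)"
    using w by (simp add: W)
  have "c (b 0 (v i)) * (P v i - wpb M A v i) \<le> c (b 0 (v w)) * (P v i - wpb M A v i)" if i: "i < n" for i
  proof (cases "i = w")
    case False
    have "b 0 (v i) \<le> b 0 (v w)"
      using mono_onD[OF wpb_bid_mono_on[OF n_pos]] component_in_space_M[OF v] i w
        alloc_highest[OF v w(1,2) i] by blast
    then have "c (b 0 (v i)) \<le> c (b 0 (v w))" by (rule monoD[OF c])
    then show ?thesis using False W[OF i] P_nonneg[OF i] by (simp add: mult_right_mono)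
  qed simp
  then have "(\<Sum>i<n. c (b 0 (v i)) * (P v i - wpb M A v i))
      \<le> (\<Sum>i<n. c (b 0 (v w)) * (P v i - wpb M A v i))"
    by (intro sum_mono) simp
  also have "\<dots> = c (b 0 (v w)) * ((\<Sum>i<n. P v i) - b 0 (v w))"
    by (simp add: sum_distrib_left[symmetric] sum_subtractf revenue)
  finally show ?thesis
    using supporting[of "b 0 (v w)" "\<Sum>i<n. P v i"] revenue by simp
qed

lemma expected_convex_revenue_wpb_le:
  fixes g :: "real \<Rightarrow> real"
  assumes P: "payment_rule n M P" and P_impl: "implements n vbar M A P" and g: "convex_on UNIV g"
    and int_wpb: "integrable M (\<lambda>v. g (\<Sum>i<n. wpb M A v i))"
    and int_P: "integrable M (\<lambda>v. g (\<Sum>i<n. P v i))"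
  shows "(\<integral>v. g (\<Sum>i<n. wpb M A v i) \<partial>M) \<le> (\<integral>v. g (\<Sum>i<n. P v i) \<partial>M)"
proof -
  obtain c where c: "mono c" and supporting: "\<And>x y. g x + c x * (y - x) \<le> g y"
    using convex_on_UNIV_mono_subgradient[OF g] by metis
  define psi where "psi t = c (b 0 t)" for t
  have psi_meas: "psi \<in> borel_measurable D"
    unfolding psi_def using borel_measurable_mono[OF c] wpb_bid_measurable[OF n_pos]
    by (rule measurable_compose[rotated])
  have psi_bound: "\<bar>psi t\<bar> \<le> \<bar>c 0\<bar> + \<bar>c vbar\<bar>" if t: "t \<in> {0..vbar}" for t
  proof -
    have "c 0 \<le> psi t" "psi t \<le> c vbar"
      unfolding psi_def using wpb_bid_bounds[OF n_pos t] t by (auto intro: monoD[OF c])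
    then show ?thesis by linarith
  qed
  define \<Delta> where "\<Delta> v = (\<Sum>i<n. psi (v i) * (P v i - wpb M A v i))" for v
  note same_weighted_pay = weighted_payment_integral_eq[OF pays_interim_if_implements[OF P P_impl]
      pays_interim_if_implements[OF payment_rule_wpb implements_wpb] _ psi_meas psi_bound]
  have int_\<Delta>: "integrable M \<Delta>"
    unfolding \<Delta>_def right_diff_distrib using same_weighted_pay(1,2)
    by (intro Bochner_Integration.integrable_sum Bochner_Integration.integrable_diff) auto
  have "(\<integral>v. \<Delta> v \<partial>M) = (\<Sum>i<n. (\<integral>v. psi (v i) * P v i \<partial>M) - (\<integral>v. psi (v i) * wpb M A v i \<partial>M))"
    unfolding \<Delta>_def right_diff_distrib using same_weighted_pay(1,2)
    by (subst Bochner_Integration.integral_sum) (auto intro!: sum.cong Bochner_Integration.integral_diff)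
  also have "\<dots> = 0"
    using same_weighted_pay(3) by simp
  finally have "(\<integral>v. \<Delta> v \<partial>M) = 0" .
  then have "(\<integral>v. g (\<Sum>i<n. wpb M A v i) \<partial>M) = (\<integral>v. g (\<Sum>i<n. wpb M A v i) + \<Delta> v \<partial>M)"
    by (simp add: Bochner_Integration.integral_add[OF int_wpb int_\<Delta>])
  also have "\<dots> \<le> (\<integral>v. g (\<Sum>i<n. P v i) \<partial>M)"
  proof (rule integral_mono[OF Bochner_Integration.integrable_add[OF int_wpb int_\<Delta>] int_P])
    fix v
    assume v: "v \<in> space M"
    have "\<And>i. i < n \<Longrightarrow> 0 \<le> P v i" using P v unfolding payment_rule_def by blast
    from convex_revenue_lower_bound[where P = P and v = v, OF this c supporting v]
    show "g (\<Sum>i<n. wpb M A v i) + \<Delta> v \<le> g (\<Sum>i<n. P v i)"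
      by (simp add: \<Delta>_def psi_def)
  qed
  finally show ?thesis .
qed

end

theorem mainTheorem7:
  fixes n :: nat and vbar :: real and f :: "real \<Rightarrow> real"
    and A P :: "(nat \<Rightarrow> real) \<Rightarrow> nat \<Rightarrow> real"
  assumes n: "2 \<le> n"
    and vbar: "0 < vbar"
    and f_meas: "f \<in> borel_measurable borel"
    and f_pos: "\<forall>x\<in>{0..vbar}. 0 < f x"
    and F_prob: "prob_space (value_dist vbar f)"
    and A_eff: "efficient_single n (profile_measure n (value_dist vbar f)) A"
    and P_rule: "payment_rule n (profile_measure n (value_dist vbar f)) P"
    and P_impl: "implements n vbar (profile_measure n (value_dist vbar f)) A P"
  shows "payment_rule n (profile_measure n (value_dist vbar f))
           (wpb (profile_measure n (value_dist vbar f)) A)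
       \<and> implements n vbar (profile_measure n (value_dist vbar f)) A
           (wpb (profile_measure n (value_dist vbar f)) A)
       \<and> (\<forall>g :: real \<Rightarrow> real. convex_on UNIV g \<longrightarrow>
           integrable (profile_measure n (value_dist vbar f))
             (\<lambda>v. g (\<Sum>i<n. wpb (profile_measure n (value_dist vbar f)) A v i)) \<longrightarrow>
           integrable (profile_measure n (value_dist vbar f)) (\<lambda>v. g (\<Sum>i<n. P v i)) \<longrightarrow>
           (\<integral>v. g (\<Sum>i<n. wpb (profile_measure n (value_dist vbar f)) A v i)
              \<partial>profile_measure n (value_dist vbar f))
           \<le> (\<integral>v. g (\<Sum>i<n. P v i) \<partial>profile_measure n (value_dist vbar f)))"
proof -
  interpret iid_efficient_auction n vbar f A
    using vbar f_meas F_prob A_eff by (rule iid_efficient_auction.intro)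
  show ?thesis
    using payment_rule_wpb implements_wpb expected_convex_revenue_wpb_le[OF P_rule P_impl] by blast
qed

end
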